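(* For $1\le\ell\le r$ let \[ F_\ell(n)=z_\ell^n\prod_{\nu=1}^{m_\ell}(a_{\ell,\nu}n+b_{\ell,\nu})^{q_{\ell,\nu}}\prod_{j=1}^{h_\ell}\mathcal G_{\Gamma_{\ell,j}}(n)^{e_{\ell,j}}, \] with $z_\ell,a_{\ell,\nu},b_{\ell,\nu},q_{\ell,\nu}\in\mathbb C$, $e_{\ell,j}\in\mathbb Z_{\ge0}$ and words $\Gamma_{\ell,j}$ in affine letters, where the affine factors are nonzero on the relevant positive integers and branches for all complex powers are fixed. Then for every positive integer $k$, \[ \sum_{n_r=1}^{k}\sum_{n_{r-1}=1}^{n_r}\cdots\sum_{n_1=1}^{n_2}\prod_{\ell=1}^{r}F_\ell(n_\ell)\in\operatorname{span}_{\mathbb C}\{\mathcal G_\Gamma(k)\}_\Gamma, \] where $\Gamma$ ranges over words in affine letters.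
   Context: An affine letter is a triple $L=(\boldsymbol\rho,\sigma,\mathbf A)$ with $\boldsymbol\rho=(\rho_1,\ldots,\rho_t)\in\mathbb C^t$, $\sigma\in\mathbb C$, $\mathbf A=((a_1,b_1),\ldots,(a_t,b_t))$, $a_\nu,b_\nu\in\mathbb C$; its value at a positive integer $n$ is $L(n)=\sigma^n\prod_{\nu}(a_\nu n+b_\nu)^{-\rho_\nu}$ (branches fixed, factors nonzero on the relevant range). For a word $\Gamma=(L_1,\ldots,L_d)$ of affine letters, $\mathcal G_\Gamma(N)=\sum_{N\ge n_1>\cdots>n_d\ge1}\prod_jL_j(n_j)$, $\mathcal G_\emptyset(N)=1$. *)

theory Defs
  imports "HOL-Analysis.Analysis"
begin

(* An affine letter L = (rho, sigma, A) with rho = (rho_1..rho_t), A = ((a_1,b_1)..(a_t,b_t)).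
   Complex powers use the principal branch (Isabelle's complex powr). *)
type_synonym letter = "complex list \<times> complex \<times> (complex \<times> complex) list"

definition lrho :: "letter \<Rightarrow> complex list" where "lrho L = fst L"
definition lsigma :: "letter \<Rightarrow> complex" where "lsigma L = fst (snd L)"
definition lA :: "letter \<Rightarrow> (complex \<times> complex) list" where "lA L = snd (snd L)"

definition letter_val :: "letter \<Rightarrow> nat \<Rightarrow> complex" where
  "letter_val L n = lsigma L ^ n * (\<Prod>\<nu><length (lrho L).
        (fst (lA L ! \<nu>) * of_nat n + snd (lA L ! \<nu>)) powr (- (lrho L ! \<nu>)))"

definition wf_letter :: "letter \<Rightarrow> bool" where
  "wf_letter L = (length (lrho L) = length (lA L) \<and>
     (\<forall>n::nat. n \<ge> 1 \<longrightarrow> (\<forall>p\<in>set (lA L). fst p * of_nat n + snd p \<noteq> 0)))"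

definition wf_word :: "letter list \<Rightarrow> bool" where
  "wf_word \<Gamma> = (\<forall>L\<in>set \<Gamma>. wf_letter L)"

definition G :: "letter list \<Rightarrow> nat \<Rightarrow> complex" where
  "G \<Gamma> N = (\<Sum>ns \<in> {ns. length ns = length \<Gamma> \<and> sorted_wrt (>) ns \<and> set ns \<subseteq> {1..N}}.
      \<Prod>j<length \<Gamma>. letter_val (\<Gamma> ! j) (ns ! j))"

(* A factor F(n) = z^n * prod_nu (a_nu n + b_nu)^(q_nu) * prod_j G_{Gamma_j}(n)^(e_j),
   given as (z, [(a_nu,b_nu,q_nu)], [(Gamma_j, e_j)]). *)
type_synonym factor = "complex \<times> (complex \<times> complex \<times> complex) list \<times> (letter list \<times> nat) list"

definition fz :: "factor \<Rightarrow> complex" where "fz F = fst F"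
definition fabq :: "factor \<Rightarrow> (complex \<times> complex \<times> complex) list" where "fabq F = fst (snd F)"
definition fge :: "factor \<Rightarrow> (letter list \<times> nat) list" where "fge F = snd (snd F)"

definition factor_val :: "factor \<Rightarrow> nat \<Rightarrow> complex" where
  "factor_val F n = fz F ^ n
     * (\<Prod>\<nu><length (fabq F). (fst (fabq F ! \<nu>) * of_nat n + fst (snd (fabq F ! \<nu>)))
                                   powr (snd (snd (fabq F ! \<nu>))))
     * (\<Prod>j<length (fge F). G (fst (fge F ! j)) n ^ snd (fge F ! j))"

definition wf_factor :: "factor \<Rightarrow> bool" where
  "wf_factor F =
     ((\<forall>n::nat. n \<ge> 1 \<longrightarrow> (\<forall>p\<in>set (fabq F). fst p * of_nat n + fst (snd p) \<noteq> 0)) \<and>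
      (\<forall>ge\<in>set (fge F). wf_word (fst ge)))"

(* sum_{n_r=1}^k sum_{n_{r-1}=1}^{n_r} ... sum_{n_1=1}^{n_2} prod_l F_l(n_l),
   with ns ! (l-1) = n_l, i.e. 1 <= n_1 <= ... <= n_r <= k *)
definition nested_sum :: "factor list \<Rightarrow> nat \<Rightarrow> complex" where
  "nested_sum Fs k = (\<Sum>ns \<in> {ns. length ns = length Fs \<and> sorted ns \<and> set ns \<subseteq> {1..k}}.
      \<Prod>l<length Fs. factor_val (Fs ! l) (ns ! l))"

end

theory Submission
  imports Defs
begin

(* Peeling off the outermost summation, a nested sum with factors F_1, ..., F_r is
   sum_{n<=k} F_r(n) S(n) with S the nested sum of F_1, ..., F_{r-1}; and F_r(n) is an affine
   letter value times a product of powers of G's.  So it suffices that the span of the G_Gamma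
   is closed under two operations.  Multiplication by G_D: expanding G_{A D} G_{B E} by the
   largest index gives the stuffle recursion, three strict partial sums of products of shorter
   words.  Partial summation g |-> sum_{n<=k} L(n) g(n): for g = G_{M Gamma} the range
   n >= n_1 splits into n > n_1, giving G_{L M Gamma}, and n = n_1, giving G_{(LM) Gamma} for
   the merged letter LM, since L(n) M(n) is again the value of an affine letter. *)

lemma prod_lessThan_add:
  fixes g :: "nat \<Rightarrow> 'a::comm_monoid_mult"
  shows "(\<Prod>i<m + k. g i) = (\<Prod>i<m. g i) * (\<Prod>i<k. g (m + i))"
  by (induct k) (simp_all add: mult.assoc)

definition letter_mult :: "letter \<Rightarrow> letter \<Rightarrow> letter" where
  "letter_mult L M = (lrho L @ lrho M, lsigma L * lsigma M, lA L @ lA M)"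

lemma letter_mult_simps [simp]:
  "lrho (letter_mult L M) = lrho L @ lrho M"
  "lsigma (letter_mult L M) = lsigma L * lsigma M"
  "lA (letter_mult L M) = lA L @ lA M"
  by (simp_all add: letter_mult_def lrho_def lsigma_def lA_def)

lemma wf_letter_mult: "wf_letter L \<Longrightarrow> wf_letter M \<Longrightarrow> wf_letter (letter_mult L M)"
  by (auto simp: wf_letter_def)

lemma letter_val_mult:
  assumes "wf_letter L"
  shows "letter_val (letter_mult L M) n = letter_val L n * letter_val M n"
proof -
  have "length (lrho L) = length (lA L)"
    using assms by (simp add: wf_letter_def)
  then show ?thesis
    unfolding letter_val_def letter_mult_simps
    by (simp add: prod_lessThan_add nth_append power_mult_distrib mult_ac)
qed

lemma G_Nil [simp]: "G [] N = 1"
proof -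
  have "{ns::nat list. length ns = 0 \<and> sorted_wrt (>) ns \<and> set ns \<subseteq> {1..N}} = {[]}"
    by auto
  then show ?thesis
    by (simp add: G_def)
qed

lemma decreasing_lists_Suc:
  "{ns. length ns = Suc d \<and> sorted_wrt (>) ns \<and> set ns \<subseteq> {1..N::nat}}
   = (\<lambda>(n, ns). n # ns) ` (SIGMA n:{1..N}. {ns. length ns = d \<and> sorted_wrt (>) ns \<and> set ns \<subseteq> {1..n - 1}})"
  by (auto simp: length_Suc_conv image_iff subset_iff; fastforce)

lemma G_Cons: "G (L # \<Gamma>) N = (\<Sum>n=1..N. letter_val L n * G \<Gamma> (n - 1))"
proof -
  define D where "D d N = {ns::nat list. length ns = d \<and> sorted_wrt (>) ns \<and> set ns \<subseteq> {1..N}}" for d N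
  have fin: "finite (D d N)" for d N
    by (rule finite_subset[OF _ finite_lists_length_eq[OF finite_atLeastAtMost[of 1 N], of d]])
       (auto simp: D_def)
  let ?val = "\<lambda>ns. \<Prod>j<Suc (length \<Gamma>). letter_val ((L # \<Gamma>) ! j) (ns ! j)"
  have "G (L # \<Gamma>) N = sum ?val (D (Suc (length \<Gamma>)) N)"
    by (simp add: G_def D_def)
  also have "\<dots> = (\<Sum>(n, ns)\<in>(SIGMA n:{1..N}. D (length \<Gamma>) (n - 1)). ?val (n # ns))"
    unfolding D_def decreasing_lists_Suc
    by (subst sum.reindex) (auto simp: inj_on_def case_prod_beta)
  also have "\<dots> = (\<Sum>n=1..N. \<Sum>ns\<in>D (length \<Gamma>) (n - 1). ?val (n # ns))"
    by (subst sum.Sigma) (auto simp: fin)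
  also have "\<dots> = (\<Sum>n=1..N. letter_val L n * G \<Gamma> (n - 1))"
    by (simp only: prod.lessThan_Suc_shift) (simp add: G_def D_def sum_distrib_left)
  finally show ?thesis .
qed

lemma G_Cons_0 [simp]: "G (L # \<Gamma>) 0 = 0"
  by (simp add: G_Cons)

lemma G_Cons_Suc: "G (L # \<Gamma>) (Suc N) = G (L # \<Gamma>) N + letter_val L (Suc N) * G \<Gamma> N"
  by (simp add: G_Cons)

lemma nested_sum_Nil: "nested_sum [] k = 1"
proof -
  have "{ns::nat list. length ns = 0 \<and> sorted ns \<and> set ns \<subseteq> {1..k}} = {[]}"
    by auto
  then show ?thesis
    by (simp add: nested_sum_def)
qed

lemma sorted_lists_Suc:
  "{ns. length ns = Suc d \<and> sorted ns \<and> set ns \<subseteq> {1..k::nat}}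
   = (\<lambda>(n, ns). ns @ [n]) ` (SIGMA n:{1..k}. {ns. length ns = d \<and> sorted ns \<and> set ns \<subseteq> {1..n}})"
  by (auto simp: length_Suc_conv_rev image_iff subset_iff sorted_append)

lemma nested_sum_snoc:
  "nested_sum (Fs @ [F]) k = (\<Sum>n=1..k. factor_val F n * nested_sum Fs n)"
proof -
  define S where "S d k = {ns::nat list. length ns = d \<and> sorted ns \<and> set ns \<subseteq> {1..k}}" for d k
  have fin: "finite (S d k)" for d k
    by (rule finite_subset[OF _ finite_lists_length_eq[OF finite_atLeastAtMost[of 1 k], of d]])
       (auto simp: S_def)
  let ?val = "\<lambda>ns. \<Prod>l<Suc (length Fs). factor_val ((Fs @ [F]) ! l) (ns ! l)"
  have "nested_sum (Fs @ [F]) k = sum ?val (S (Suc (length Fs)) k)"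
    by (simp add: nested_sum_def S_def)
  also have "\<dots> = (\<Sum>(n, ns)\<in>(SIGMA n:{1..k}. S (length Fs) n). ?val (ns @ [n]))"
    unfolding S_def sorted_lists_Suc
    by (subst sum.reindex) (auto simp: inj_on_def case_prod_beta)
  also have "\<dots> = (\<Sum>n=1..k. \<Sum>ns\<in>S (length Fs) n. ?val (ns @ [n]))"
    by (subst sum.Sigma) (auto simp: fin)
  also have "\<dots> = (\<Sum>n=1..k. \<Sum>ns\<in>S (length Fs) n. factor_val F n * (\<Prod>l<length Fs. factor_val (Fs ! l) (ns ! l)))"
    by (intro sum.cong refl) (auto simp: S_def prod.lessThan_Suc nth_append intro!: prod.cong)
  also have "\<dots> = (\<Sum>n=1..k. factor_val F n * nested_sum Fs n)"
    by (simp add: nested_sum_def S_def sum_distrib_left)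
  finally show ?thesis .
qed

lemma partial_sum_G_Cons:
  assumes "wf_letter L"
  shows "(\<Sum>n=1..N. letter_val L n * G (M # \<Gamma>) n) = G (L # M # \<Gamma>) N + G (letter_mult L M # \<Gamma>) N"
proof -
  have "letter_val L n * G (M # \<Gamma>) n
        = letter_val L n * G (M # \<Gamma>) (n - 1) + letter_val (letter_mult L M) n * G \<Gamma> (n - 1)"
    if "n \<in> {1..N}" for n
    using that by (cases n) (auto simp: G_Cons_Suc letter_val_mult assms algebra_simps)
  then show ?thesis
    by (simp add: G_Cons sum.distrib)
qed

lemma G_Cons_mult_G_Cons:
  assumes "wf_letter A"
  shows "G (A # D) N * G (B # E) N = (\<Sum>n=1..N.
            letter_val A n * (G D (n - 1) * G (B # E) (n - 1))
          + letter_val B n * (G (A # D) (n - 1) * G E (n - 1))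
          + letter_val (letter_mult A B) n * (G D (n - 1) * G E (n - 1)))"
proof (induction N)
  case 0
  then show ?case by simp
next
  case (Suc N)
  have split_last: "(\<Sum>n=1..Suc N. t n) = (\<Sum>n=1..N. t n) + t (Suc N)" for t :: "nat \<Rightarrow> complex"
    by simp
  show ?case
    unfolding split_last Suc.IH[symmetric] by (simp add: G_Cons_Suc letter_val_mult assms algebra_simps)
qed

definition G_span :: "(nat \<Rightarrow> complex) set" where
  "G_span = {f. \<exists>S c. finite S \<and> (\<forall>\<Gamma>\<in>S. wf_word \<Gamma>) \<and> f = (\<lambda>k. \<Sum>\<Gamma>\<in>S. c \<Gamma> * G \<Gamma> k)}"

lemma G_in_G_span: "wf_word \<Gamma> \<Longrightarrow> G \<Gamma> \<in> G_span"
  unfolding G_span_def by (intro CollectI exI[of _ "{\<Gamma>}"] exI[of _ "\<lambda>_. 1"]) auto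

lemma one_in_G_span: "(\<lambda>k. 1) \<in> G_span"
  using G_in_G_span[of "[]"] by (simp add: wf_word_def G_Nil[abs_def])

lemma G_spanE:
  assumes "f \<in> G_span"
  obtains S c where "finite S" "\<forall>\<Gamma>\<in>S. wf_word \<Gamma>" "f = (\<lambda>k. \<Sum>\<Gamma>\<in>S. c \<Gamma> * G \<Gamma> k)"
  using assms unfolding G_span_def by blast

lemma G_span_cmult:
  assumes "f \<in> G_span"
  shows "(\<lambda>k. a * f k) \<in> G_span"
proof -
  obtain S c where "finite S" "\<forall>\<Gamma>\<in>S. wf_word \<Gamma>" "f = (\<lambda>k. \<Sum>\<Gamma>\<in>S. c \<Gamma> * G \<Gamma> k)"
    using assms by (rule G_spanE)
  then show ?thesis
    unfolding G_span_def
    by (intro CollectI exI[of _ S] exI[of _ "\<lambda>\<Gamma>. a * c \<Gamma>"]) (simp add: sum_distrib_left mult.assoc)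
qed

lemma G_span_add:
  assumes "f \<in> G_span" "g \<in> G_span"
  shows "(\<lambda>k. f k + g k) \<in> G_span"
proof -
  obtain S1 c1 where S1: "finite S1" "\<forall>\<Gamma>\<in>S1. wf_word \<Gamma>" "f = (\<lambda>k. \<Sum>\<Gamma>\<in>S1. c1 \<Gamma> * G \<Gamma> k)"
    using assms(1) by (rule G_spanE)
  obtain S2 c2 where S2: "finite S2" "\<forall>\<Gamma>\<in>S2. wf_word \<Gamma>" "g = (\<lambda>k. \<Sum>\<Gamma>\<in>S2. c2 \<Gamma> * G \<Gamma> k)"
    using assms(2) by (rule G_spanE)
  define c where "c \<Gamma> = (if \<Gamma> \<in> S1 then c1 \<Gamma> else 0) + (if \<Gamma> \<in> S2 then c2 \<Gamma> else 0)" for \<Gamma>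
  have "(\<Sum>\<Gamma>\<in>S1 \<union> S2. (if \<Gamma> \<in> S1 then c1 \<Gamma> else 0) * G \<Gamma> k) = (\<Sum>\<Gamma>\<in>S1. c1 \<Gamma> * G \<Gamma> k)"
       "(\<Sum>\<Gamma>\<in>S1 \<union> S2. (if \<Gamma> \<in> S2 then c2 \<Gamma> else 0) * G \<Gamma> k) = (\<Sum>\<Gamma>\<in>S2. c2 \<Gamma> * G \<Gamma> k)" for k
    by (rule sum.mono_neutral_cong_right; use S1 S2 in auto)+
  then have "(\<lambda>k. f k + g k) = (\<lambda>k. \<Sum>\<Gamma>\<in>S1 \<union> S2. c \<Gamma> * G \<Gamma> k)"
    by (simp add: S1(3) S2(3) c_def distrib_right sum.distrib)
  then show ?thesis
    unfolding G_span_def using S1 S2 by blast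
qed

lemma G_span_lincomb:
  assumes "finite I" "\<And>i. i \<in> I \<Longrightarrow> h i \<in> G_span"
  shows "(\<lambda>k. \<Sum>i\<in>I. c i * h i k) \<in> G_span"
  using assms
proof (induction I rule: finite_induct)
  case empty
  have "(\<lambda>k. 0) \<in> G_span"
    unfolding G_span_def by (intro CollectI exI[of _ "{}"]) auto
  then show ?case by simp
next
  case (insert i I)
  then have "(\<lambda>k. c i * h i k + (\<Sum>i\<in>I. c i * h i k)) \<in> G_span"
    by (intro G_span_add G_span_cmult) auto
  with insert show ?case by simp
qed

lemma G_span_linear_image:
  assumes "f \<in> G_span"
    and "\<And>\<Gamma>. wf_word \<Gamma> \<Longrightarrow> T (G \<Gamma>) \<in> G_span"
    and "\<And>S c. finite S \<Longrightarrow> T (\<lambda>k. \<Sum>\<Gamma>\<in>S. c \<Gamma> * G \<Gamma> k) = (\<lambda>k. \<Sum>\<Gamma>\<in>S. c \<Gamma> * T (G \<Gamma>) k)"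
  shows "T f \<in> G_span"
proof -
  obtain S c where "finite S" "\<forall>\<Gamma>\<in>S. wf_word \<Gamma>" "f = (\<lambda>k. \<Sum>\<Gamma>\<in>S. c \<Gamma> * G \<Gamma> k)"
    using assms(1) by (rule G_spanE)
  then show ?thesis
    using assms(2,3) G_span_lincomb[of S "\<lambda>\<Gamma>. T (G \<Gamma>)" c] by simp
qed

lemma partial_sum_lincomb:
  "(\<lambda>k. \<Sum>n=1..k. l n * (\<Sum>\<Gamma>\<in>S. c \<Gamma> * g \<Gamma> n)) = (\<lambda>k. \<Sum>\<Gamma>\<in>S. c \<Gamma> * (\<Sum>n=1..k. l n * g \<Gamma> n))"
  for l :: "nat \<Rightarrow> 'a::comm_semiring_0"
  by (simp add: sum_distrib_left mult.left_commute sum.swap[of _ S])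

lemma G_span_strict_partial_sum:
  assumes "f \<in> G_span" "wf_letter L"
  shows "(\<lambda>k. \<Sum>n=1..k. letter_val L n * f (n - 1)) \<in> G_span"
  using assms(1)
proof (rule G_span_linear_image[where T = "\<lambda>f k. \<Sum>n=1..k. letter_val L n * f (n - 1)"])
  show "(\<lambda>k. \<Sum>n=1..k. letter_val L n * G \<Gamma> (n - 1)) \<in> G_span" if "wf_word \<Gamma>" for \<Gamma>
    using G_in_G_span[of "L # \<Gamma>"] that assms(2) by (simp add: G_Cons[abs_def] wf_word_def)
qed (rule partial_sum_lincomb)

lemma G_span_partial_sum:
  assumes "f \<in> G_span" "wf_letter L"
  shows "(\<lambda>k. \<Sum>n=1..k. letter_val L n * f n) \<in> G_span"
  using assms(1)
proof (rule G_span_linear_image[where T = "\<lambda>f k. \<Sum>n=1..k. letter_val L n * f n"])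
  fix \<Gamma> assume wf: "wf_word \<Gamma>"
  show "(\<lambda>k. \<Sum>n=1..k. letter_val L n * G \<Gamma> n) \<in> G_span"
  proof (cases \<Gamma>)
    case Nil
    then show ?thesis
      using G_in_G_span[of "[L]"] assms(2) by (simp add: G_Cons[abs_def] wf_word_def)
  next
    case (Cons M \<Gamma>')
    then have "(\<lambda>k. G (L # \<Gamma>) k + G (letter_mult L M # \<Gamma>') k) \<in> G_span"
      using wf assms(2) by (intro G_span_add G_in_G_span) (auto simp: wf_word_def wf_letter_mult)
    then show ?thesis
      unfolding Cons partial_sum_G_Cons[OF assms(2)] .
  qed
qed (rule partial_sum_lincomb)

lemma G_mult_G_in_G_span:
  "wf_word D \<Longrightarrow> wf_word E \<Longrightarrow> (\<lambda>k. G D k * G E k) \<in> G_span"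
proof (induction "length D + length E" arbitrary: D E rule: less_induct)
  case less
  show ?case
  proof (cases D; cases E)
    fix A D' B E' assume D: "D = A # D'" and E: "E = B # E'"
    have wf: "wf_letter A" "wf_word D'" "wf_letter B" "wf_word E'"
      using less.prems D E by (auto simp: wf_word_def)
    have "(\<lambda>k. G D' k * G E k) \<in> G_span" "(\<lambda>k. G D k * G E' k) \<in> G_span"
         "(\<lambda>k. G D' k * G E' k) \<in> G_span"
      using less.hyps less.prems D E wf by auto
    then have "(\<lambda>k. (\<Sum>n=1..k. letter_val A n * (G D' (n - 1) * G E (n - 1)))
                  + (\<Sum>n=1..k. letter_val B n * (G D (n - 1) * G E' (n - 1)))
                  + (\<Sum>n=1..k. letter_val (letter_mult A B) n * (G D' (n - 1) * G E' (n - 1))))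
               \<in> G_span"
      by (intro G_span_add G_span_strict_partial_sum wf wf_letter_mult)
    then show ?case
      by (simp add: D E G_Cons_mult_G_Cons wf sum.distrib)
  qed (use G_in_G_span one_in_G_span less.prems in simp_all)
qed

lemma G_span_mult_G:
  assumes "f \<in> G_span" "wf_word D"
  shows "(\<lambda>k. G D k * f k) \<in> G_span"
  using assms(1)
proof (rule G_span_linear_image[where T = "\<lambda>f k. G D k * f k"])
  show "(\<lambda>k. G D k * G \<Gamma> k) \<in> G_span" if "wf_word \<Gamma>" for \<Gamma>
    using that assms(2) by (rule G_mult_G_in_G_span[rotated])
qed (simp add: sum_distrib_left mult_ac)

lemma G_span_mult_G_power:
  "f \<in> G_span \<Longrightarrow> wf_word D \<Longrightarrow> (\<lambda>k. G D k ^ e * f k) \<in> G_span"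
  by (induction e) (simp_all add: mult.assoc G_span_mult_G)

lemma G_span_mult_prod_G_powers:
  "f \<in> G_span \<Longrightarrow> \<forall>ge\<in>set ges. wf_word (fst ge) \<Longrightarrow>
   (\<lambda>k. (\<Prod>j<length ges. G (fst (ges ! j)) k ^ snd (ges ! j)) * f k) \<in> G_span"
proof (induction ges)
  case Nil
  then show ?case by simp
next
  case (Cons ge ges)
  then have "(\<lambda>k. G (fst ge) k ^ snd ge * ((\<Prod>j<length ges. G (fst (ges ! j)) k ^ snd (ges ! j)) * f k))
             \<in> G_span"
    by (intro G_span_mult_G_power) auto
  then show ?case
    by (simp add: prod.lessThan_Suc_shift mult.assoc del: prod.lessThan_Suc)
qed

definition factor_letter :: "factor \<Rightarrow> letter" where
  "factor_letter F = (map (\<lambda>(a, b, q). - q) (fabq F), fz F, map (\<lambda>(a, b, q). (a, b)) (fabq F))"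

lemma wf_factor_letter: "wf_factor F \<Longrightarrow> wf_letter (factor_letter F)"
  by (fastforce simp: wf_factor_def wf_letter_def factor_letter_def lrho_def lA_def)

lemma factor_val_eq:
  "factor_val F n = letter_val (factor_letter F) n * (\<Prod>j<length (fge F). G (fst (fge F ! j)) n ^ snd (fge F ! j))"
  by (simp add: factor_val_def letter_val_def factor_letter_def lrho_def lA_def lsigma_def case_prod_beta)

lemma nested_sum_in_G_span: "\<forall>F\<in>set Fs. wf_factor F \<Longrightarrow> nested_sum Fs \<in> G_span"
proof (induction Fs rule: rev_induct)
  case Nil
  show ?case
    using one_in_G_span by (simp add: nested_sum_Nil[abs_def])
next
  case (snoc F Fs)
  then have "(\<lambda>k. \<Sum>n=1..k. letter_val (factor_letter F) n *
               ((\<Prod>j<length (fge F). G (fst (fge F ! j)) n ^ snd (fge F ! j)) * nested_sum Fs n))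
             \<in> G_span"
    by (intro G_span_partial_sum G_span_mult_prod_G_powers wf_factor_letter) (auto simp: wf_factor_def)
  then show ?case
    by (simp add: nested_sum_snoc[abs_def] factor_val_eq mult.assoc)
qed

theorem corollary7p3:
  fixes Fs :: "factor list"
  assumes "length Fs \<ge> 1"
    and "\<forall>F\<in>set Fs. wf_factor F"
  shows "\<exists>S :: letter list set. \<exists>c :: letter list \<Rightarrow> complex.
           finite S \<and> (\<forall>\<Gamma>\<in>S. wf_word \<Gamma>) \<and>
           (\<forall>k::nat. k \<ge> 1 \<longrightarrow> nested_sum Fs k = (\<Sum>\<Gamma>\<in>S. c \<Gamma> * G \<Gamma> k))"
proof -
  obtain S c where "finite S" "\<forall>\<Gamma>\<in>S. wf_word \<Gamma>" "nested_sum Fs = (\<lambda>k. \<Sum>\<Gamma>\<in>S. c \<Gamma> * G \<Gamma> k)"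
    using nested_sum_in_G_span[OF assms(2)] by (rule G_spanE)
  then show ?thesis
    by auto
qed

end
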